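(* If $v\in\mathfrak{S}_n$ is boolean with Robinson–Schensted shape $\lambda$, then $\mathbf{a}(v)=\lambda_2(v)$.
   Context: A permutation is boolean if its reduced words (in the simple reflections $\sigma_i=(i,i+1)$) have no repeated letters. $\lambda_2(v)$ is the length of the second row of the shape $\lambda$ of the tableaux assigned to $v$ by the Robinson–Schensted correspondence (zero if absent). Lusztig's $\mathbf{a}$-function on $\mathfrak{S}_n$ is the unique function constant on two-sided Kazhdan–Lusztig cells (sets of permutations with equal Robinson–Schensted shape) with $\mathbf{a}(w)=\ell(w)$ whenever $w$ is the longest element of a parabolic subgroup. *)

theory Defs
  imports "HOL-Combinatorics.Permutations"
begin

text \<open>Permutations of S_n are modelled as functions v with v permutes {..<n}
  (positions/values 0,...,n-1). The simple reflection sigma_i, i < n-1,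
  swaps i and i+1.\<close>

definition sref :: "nat \<Rightarrow> nat \<Rightarrow> nat" where
  "sref i = (\<lambda>x. if x = i then Suc i else if x = Suc i then i else x)"

definition word_perm :: "nat list \<Rightarrow> nat \<Rightarrow> nat" where
  "word_perm ws = foldr (\<lambda>i p. sref i \<circ> p) ws id"

definition is_word :: "nat \<Rightarrow> nat list \<Rightarrow> bool" where
  "is_word n ws \<longleftrightarrow> (\<forall>i \<in> set ws. Suc i < n)"

definition coxeter_length :: "nat \<Rightarrow> (nat \<Rightarrow> nat) \<Rightarrow> nat" where
  "coxeter_length n w = (LEAST k. \<exists>ws. is_word n ws \<and> length ws = k \<and> word_perm ws = w)"

definition reduced_word :: "nat \<Rightarrow> (nat \<Rightarrow> nat) \<Rightarrow> nat list \<Rightarrow> bool" where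
  "reduced_word n w ws \<longleftrightarrow> is_word n ws \<and> word_perm ws = w \<and> length ws = coxeter_length n w"

definition boolean_perm :: "nat \<Rightarrow> (nat \<Rightarrow> nat) \<Rightarrow> bool" where
  "boolean_perm n w \<longleftrightarrow> (\<forall>ws. reduced_word n w ws \<longrightarrow> distinct ws)"

definition parabolic :: "nat \<Rightarrow> nat set \<Rightarrow> (nat \<Rightarrow> nat) set" where
  "parabolic n J = {word_perm ws | ws. is_word n ws \<and> set ws \<subseteq> J}"

definition longest_parabolic :: "nat \<Rightarrow> nat set \<Rightarrow> (nat \<Rightarrow> nat) \<Rightarrow> bool" where
  "longest_parabolic n J w \<longleftrightarrow> w \<in> parabolic n J \<and>
     (\<forall>u \<in> parabolic n J. coxeter_length n u \<le> coxeter_length n w)"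

text \<open>Robinson--Schensted row insertion (tableau = list of rows, each increasing).\<close>
fun row_insert :: "nat \<Rightarrow> nat list \<Rightarrow> nat list \<times> nat option" where
  "row_insert x [] = ([x], None)"
| "row_insert x (y # ys) =
     (if x < y then (x # ys, Some y)
      else (let (ys', b) = row_insert x ys in (y # ys', b)))"

fun rs_insert :: "nat \<Rightarrow> nat list list \<Rightarrow> nat list list" where
  "rs_insert x [] = [[x]]"
| "rs_insert x (r # rs) =
     (case row_insert x r of
        (r', None) \<Rightarrow> r' # rs
      | (r', Some y) \<Rightarrow> r' # rs_insert y rs)"

definition rs_P :: "nat \<Rightarrow> (nat \<Rightarrow> nat) \<Rightarrow> nat list list" where
  "rs_P n v = foldl (\<lambda>T x. rs_insert x T) [] (map v [0..<n])"

definition rs_shape :: "nat \<Rightarrow> (nat \<Rightarrow> nat) \<Rightarrow> nat list" where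
  "rs_shape n v = map length (rs_P n v)"

definition lambda2 :: "nat \<Rightarrow> (nat \<Rightarrow> nat) \<Rightarrow> nat" where
  "lambda2 n v = (if 2 \<le> length (rs_shape n v) then rs_shape n v ! 1 else 0)"

text \<open>The defining properties of Lusztig's a-function on S_n: constant on two-sided
  cells (equal RS shape) and equal to the length on longest elements of parabolic subgroups.\<close>
definition is_a_function :: "nat \<Rightarrow> ((nat \<Rightarrow> nat) \<Rightarrow> nat) \<Rightarrow> bool" where
  "is_a_function n a \<longleftrightarrow>
     (\<forall>v w. v permutes {..<n} \<longrightarrow> w permutes {..<n} \<longrightarrow>
        rs_shape n v = rs_shape n w \<longrightarrow> a v = a w) \<and>
     (\<forall>J w. J \<subseteq> {i. Suc i < n} \<longrightarrow> longest_parabolic n J w \<longrightarrow> a w = coxeter_length n w)"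

end

theory Submission
  imports Defs
begin

text \<open>A boolean permutation has a reduced word without repeated letters, and a product of
  distinct simple reflections avoids the pattern 321. When a 321-avoiding word is inserted, the
  entries bumped out of the first row arrive in increasing order, so they form the second row
  and the shape is \<open>[n - k, k]\<close> with \<open>k = lambda2 n v\<close>. The product
  \<open>sigma_0 sigma_2 ... sigma_(2k-2)\<close> of \<open>k\<close> commuting reflections has the same shape and is the
  longest element of the parabolic subgroup they generate, of length \<open>k\<close>. Hence \<open>a v = k\<close>.\<close>

subsection \<open>Words in the simple reflections\<close>

lemma word_perm_Nil [simp]: "word_perm [] = id"
  by (simp add: word_perm_def)

lemma word_perm_Cons [simp]: "word_perm (i # ws) = sref i \<circ> word_perm ws"
  by (simp add: word_perm_def)

lemma word_perm_append: "word_perm (ws @ vs) = word_perm ws \<circ> word_perm vs"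
  by (induction ws) (simp_all add: comp_assoc)

lemma sref_eq_transpose: "sref i = transpose i (Suc i)"
  by (auto simp: sref_def transpose_def)

lemma sref_comp_sref: "sref i \<circ> sref i = id"
  by (auto simp: sref_def)

lemma sref_commute:
  "i \<noteq> j \<Longrightarrow> Suc i \<noteq> j \<Longrightarrow> Suc j \<noteq> i \<Longrightarrow> sref i \<circ> sref j = sref j \<circ> sref i"
  by (rule ext) (simp add: sref_def)

lemma sref_permutes: "Suc i < n \<Longrightarrow> sref i permutes {..<n}"
  unfolding sref_eq_transpose by (rule permutes_swap_id) auto

lemma word_perm_permutes: "is_word n ws \<Longrightarrow> word_perm ws permutes {..<n}"
proof (induction ws)
  case Nil
  show ?case
    using permutes_id[of "{..<n}"] by (simp add: id_def)
next
  case (Cons i ws)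
  then have "word_perm ws permutes {..<n}" "sref i permutes {..<n}"
    by (auto simp: is_word_def sref_permutes)
  then show ?case
    unfolding word_perm_Cons by (rule permutes_compose)
qed

lemma inj_word_perm: "inj (word_perm ws)"
proof (induction ws)
  case (Cons i ws)
  have "inj (sref i)"
    by (auto simp: inj_def sref_def split: if_splits)
  then show ?case
    using Cons.IH unfolding word_perm_Cons by (rule inj_compose)
qed simp

lemma sref_le_iff: "j \<noteq> i \<Longrightarrow> sref j x \<le> i \<longleftrightarrow> x \<le> i"
  by (auto simp: sref_def)

lemma word_perm_le_iff: "i \<notin> set ws \<Longrightarrow> word_perm ws x \<le> i \<longleftrightarrow> x \<le> i"
  by (induction ws arbitrary: x) (auto simp: sref_le_iff)

lemma transpose_has_word:
  "a < b \<Longrightarrow> b < n \<Longrightarrow> \<exists>ws. is_word n ws \<and> word_perm ws = transpose a b"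
proof (induction b)
  case 0
  then show ?case by simp
next
  case (Suc c)
  show ?case
  proof (cases "a = c")
    case True
    with Suc.prems show ?thesis
      by (intro exI[of _ "[a]"]) (simp add: is_word_def sref_eq_transpose)
  next
    case False
    with Suc obtain ws where ws: "is_word n ws" "word_perm ws = transpose a c"
      by auto
    have "word_perm ([c] @ ws @ [c]) = transpose a (Suc c)"
      using False Suc.prems by (auto simp: word_perm_append ws sref_def transpose_def)
    moreover have "is_word n ([c] @ ws @ [c])"
      using ws Suc.prems by (auto simp: is_word_def)
    ultimately show ?thesis by blast
  qed
qed

lemma permutes_has_word:
  assumes "v permutes {..<n}"
  shows "\<exists>ws. is_word n ws \<and> word_perm ws = v"
  using assms finite_lessThan
proof (induction rule: permutes_induct)
  case id
  show ?case by (intro exI[of _ "[]"]) (simp add: is_word_def)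
next
  case (swap a b p)
  then obtain ws where ws: "is_word n ws" "word_perm ws = p"
    by blast
  have "\<exists>ts. is_word n ts \<and> word_perm ts = transpose a b"
  proof (cases a b rule: linorder_cases)
    case less
    then show ?thesis using transpose_has_word swap.hyps by auto
  next
    case greater
    then show ?thesis using transpose_has_word[of b a n] swap.hyps transpose_commute[of a b] by auto
  qed (auto intro: exI[of _ "[]"] simp: is_word_def)
  then obtain ts where ts: "is_word n ts" "word_perm ts = transpose a b"
    by blast
  show ?case
    using ws ts by (intro exI[of _ "ts @ ws"]) (auto simp: word_perm_append is_word_def)
qed

lemma reduced_word_exists:
  assumes "v permutes {..<n}"
  obtains ws where "reduced_word n v ws"
proof -
  have "\<exists>k ws. is_word n ws \<and> length ws = k \<and> word_perm ws = v"
    using permutes_has_word[OF assms] by blast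
  from LeastI_ex[OF this] show ?thesis
    using that unfolding reduced_word_def coxeter_length_def by blast
qed

lemma coxeter_length_le: "is_word n ws \<Longrightarrow> coxeter_length n (word_perm ws) \<le> length ws"
  unfolding coxeter_length_def by (rule Least_le) blast

subsection \<open>Boolean permutations avoid 321\<close>

definition avoids_321 :: "nat list \<Rightarrow> bool" where
  "avoids_321 xs \<longleftrightarrow>
     (\<forall>i j k. i < j \<longrightarrow> j < k \<longrightarrow> k < length xs \<longrightarrow> \<not> (xs ! k < xs ! j \<and> xs ! j < xs ! i))"

lemma avoids_321_appendD: "avoids_321 (xs @ ys) \<Longrightarrow> avoids_321 xs"
  unfolding avoids_321_def
proof (intro allI impI)
  fix i j k
  assume "\<forall>i j k. i < j \<longrightarrow> j < k \<longrightarrow> k < length (xs @ ys) \<longrightarrow>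
      \<not> ((xs @ ys) ! k < (xs @ ys) ! j \<and> (xs @ ys) ! j < (xs @ ys) ! i)"
    and ijk: "i < j" "j < k" "k < length xs"
  moreover have "(xs @ ys) ! k = xs ! k" "(xs @ ys) ! j = xs ! j" "(xs @ ys) ! i = xs ! i"
    using ijk by (simp_all add: nth_append)
  ultimately show "\<not> (xs ! k < xs ! j \<and> xs ! j < xs ! i)"
    by (metis length_append trans_less_add1)
qed

text \<open>Since \<open>i\<close> does not occur in \<open>ws\<close>, \<open>u = word_perm ws\<close> maps \<open>{..i}\<close> onto itself. So the
  values \<open>i\<close> and \<open>Suc i\<close> exchanged by \<open>sref i\<close> sit at positions \<open>p \<le> i < q\<close>, and no third
  position can complete a 321 pattern with them.\<close>
lemma avoids_321_word_perm:
  assumes "distinct ws"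
  shows "avoids_321 (map (word_perm ws) [0..<n])"
  using assms
proof (induction ws)
  case Nil
  show ?case by (auto simp: avoids_321_def)
next
  case (Cons i ws)
  let ?u = "word_perm ws"
  have IH: "avoids_321 (map ?u [0..<n])" and fixes_le: "\<And>x. ?u x \<le> i \<longleftrightarrow> x \<le> i"
    using Cons by (auto simp: word_perm_le_iff)
  show ?case
    unfolding avoids_321_def
  proof (intro allI impI notI)
    fix a b c
    assume abc: "a < b" "b < c" "c < length (map (word_perm (i # ws)) [0..<n])"
      and "map (word_perm (i # ws)) [0..<n] ! c < map (word_perm (i # ws)) [0..<n] ! b \<and>
        map (word_perm (i # ws)) [0..<n] ! b < map (word_perm (i # ws)) [0..<n] ! a"
    then have pattern: "sref i (?u c) < sref i (?u b) \<and> sref i (?u b) < sref i (?u a)"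
      by simp
    have no_pattern: "\<not> (?u c < ?u b \<and> ?u b < ?u a)"
      using IH[unfolded avoids_321_def, rule_format, of a b c] abc by simp
    have "?u a \<noteq> ?u b" "?u b \<noteq> ?u c" "?u a \<noteq> ?u c"
      using inj_word_perm[of ws] abc by (metis injD less_irrefl less_trans)+
    then show False
      using pattern no_pattern fixes_le[of a] fixes_le[of b] fixes_le[of c] abc
      unfolding sref_def by (auto split: if_splits)
  qed
qed

lemma avoids_321_if_boolean_perm:
  assumes "v permutes {..<n}" and "boolean_perm n v"
  shows "avoids_321 (map v [0..<n])"
proof -
  obtain ws where ws: "reduced_word n v ws"
    using reduced_word_exists[OF assms(1)] .
  then have "distinct ws"
    using assms(2) by (simp add: boolean_perm_def)
  then show ?thesis
    using ws avoids_321_word_perm by (auto simp: reduced_word_def)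
qed

subsection \<open>Insertion into the first row\<close>

text \<open>\<open>R\<close> is the first row of the insertion tableau and \<open>B\<close> lists, in order, the entries bumped
  out of it; these are exactly the entries inserted into the remaining rows.\<close>
fun first_row_step :: "nat list \<times> nat list \<Rightarrow> nat \<Rightarrow> nat list \<times> nat list" where
  "first_row_step (R, B) x =
     (case row_insert x R of (R', None) \<Rightarrow> (R', B) | (R', Some y) \<Rightarrow> (R', B @ [y]))"

abbreviation rs_insert_list :: "nat list list \<Rightarrow> nat list \<Rightarrow> nat list list" where
  "rs_insert_list T xs \<equiv> foldl (\<lambda>T x. rs_insert x T) T xs"

lemma rs_insert_list_first_row:
  "rs_insert_list (R # rs_insert_list T B) xs =
     (case foldl first_row_step (R, B) xs of (R', B') \<Rightarrow> R' # rs_insert_list T B')"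
proof (induction xs arbitrary: R B)
  case (Cons x xs)
  obtain R1 b where rb: "row_insert x R = (R1, b)"
    by fastforce
  show ?case
  proof (cases b)
    case None
    then show ?thesis using Cons.IH[of R1 B] rb by simp
  next
    case (Some y)
    then show ?thesis using Cons.IH[of R1 "B @ [y]"] rb by simp
  qed
qed simp

lemma rs_insert_list_Nil:
  "rs_insert_list [] xs =
     (if xs = [] then [] else case foldl first_row_step ([], []) xs of (R, B) \<Rightarrow> R # rs_insert_list [] B)"
proof (cases xs)
  case (Cons x xs')
  have "rs_insert_list [] xs = rs_insert_list ([x] # rs_insert_list [] []) xs'"
    using Cons by simp
  also have "\<dots> = (case foldl first_row_step ([x], []) xs' of (R, B) \<Rightarrow> R # rs_insert_list [] B)"
    by (rule rs_insert_list_first_row)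
  also have "foldl first_row_step ([x], []) xs' = foldl first_row_step ([], []) xs"
    using Cons by simp
  finally show ?thesis
    using Cons by simp
qed simp

lemma row_insert_greater: "\<forall>y\<in>set R. y < x \<Longrightarrow> row_insert x R = (R @ [x], None)"
  by (induction R) auto

lemma row_insert_bump_last:
  "\<forall>z\<in>set R. z < x \<Longrightarrow> x < y \<Longrightarrow> row_insert x (R @ [y]) = (R @ [x], Some y)"
  by (induction R) auto

lemma row_insert_cases:
  assumes "row_insert x R = (R', b)"
  obtains "b = None" "R' = R @ [x]" "\<forall>y\<in>set R. y \<le> x"
  | p where "p < length R" "b = Some (R ! p)" "x < R ! p" "R' = R[p := x]" "\<forall>j<p. R ! j \<le> x"
proof -
  have "(b = None \<and> R' = R @ [x] \<and> (\<forall>y\<in>set R. y \<le> x)) \<or>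
    (\<exists>p<length R. b = Some (R ! p) \<and> x < R ! p \<and> R' = R[p := x] \<and> (\<forall>j<p. R ! j \<le> x))"
    using assms
  proof (induction R arbitrary: R' b)
    case (Cons y ys)
    show ?case
    proof (cases "x < y")
      case True
      with Cons.prems show ?thesis
        by (intro disjI2 exI[of _ 0]) auto
    next
      case False
      obtain ys' b' where rec: "row_insert x ys = (ys', b')"
        by fastforce
      with Cons.prems False have R': "R' = y # ys'" "b = b'"
        by auto
      from Cons.IH[OF rec] show ?thesis
      proof (elim disjE exE conjE)
        assume "b' = None" "ys' = ys @ [x]" "\<forall>z\<in>set ys. z \<le> x"
        with R' False show ?thesis
          by auto
      next
        fix p
        assume "p < length ys" "b' = Some (ys ! p)" "x < ys ! p" "ys' = ys[p := x]" "\<forall>j<p. ys ! j \<le> x"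
        with R' False show ?thesis
          by (intro disjI2 exI[of _ "Suc p"]) (auto simp: less_Suc_eq_0_disj)
      qed
    qed
  qed simp
  with that show ?thesis
    by blast
qed

lemma foldl_first_row_step_sorted:
  "sorted_wrt (<) B \<Longrightarrow> foldl first_row_step ([], []) B = (B, [])"
  by (induction B rule: rev_induct) (auto simp: sorted_wrt_append row_insert_greater)

definition two_row_shape :: "nat \<Rightarrow> nat \<Rightarrow> nat list" where
  "two_row_shape n k = filter (\<lambda>l. 0 < l) [n - k, k]"

lemma lambda2_two_row_shape: "rs_shape n v = two_row_shape n k \<Longrightarrow> 2 * k \<le> n \<Longrightarrow> lambda2 n v = k"
  by (auto simp: lambda2_def two_row_shape_def)

lemma rs_shape_two_rows:
  assumes "foldl first_row_step ([], []) (map v [0..<n]) = (R, B)"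
    and "sorted_wrt (<) B" "length B \<le> length R" "length R + length B = n"
  shows "rs_shape n v = two_row_shape n (length B)"
proof -
  have "rs_insert_list [] B = filter (\<lambda>r. r \<noteq> []) [B]"
    using rs_insert_list_Nil[of B] foldl_first_row_step_sorted[OF assms(2)] by simp
  then have "rs_P n v = filter (\<lambda>r. r \<noteq> []) [R, B]"
    using rs_insert_list_Nil[of "map v [0..<n]"] assms(1,3,4) by (auto simp: rs_P_def)
  then show ?thesis
    using assms(3,4) by (auto simp: rs_shape_def two_row_shape_def)
qed

subsection \<open>The bumped entries of a 321-avoiding word increase\<close>

definition has_inversion_above :: "nat list \<Rightarrow> nat \<Rightarrow> bool" where
  "has_inversion_above xs z \<longleftrightarrow> (\<exists>i j. i < j \<and> j < length xs \<and> xs ! j < xs ! i \<and> z \<le> xs ! j)"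

lemma has_inversion_above_append:
  "has_inversion_above xs z \<Longrightarrow> has_inversion_above (xs @ ys) z"
  unfolding has_inversion_above_def
proof (elim exE conjE)
  fix i j
  assume "i < j" "j < length xs" "xs ! j < xs ! i" "z \<le> xs ! j"
  then show "\<exists>i j. i < j \<and> j < length (xs @ ys) \<and> (xs @ ys) ! j < (xs @ ys) ! i \<and> z \<le> (xs @ ys) ! j"
    by (intro exI[of _ i] exI[of _ j]) (simp add: nth_append)
qed

lemma has_inversion_above_snoc:
  "i < length xs \<Longrightarrow> a < xs ! i \<Longrightarrow> z \<le> a \<Longrightarrow> has_inversion_above (xs @ [a]) z"
  unfolding has_inversion_above_def
  by (rule exI[of _ i], rule exI[of _ "length xs"]) (simp add: nth_append)

text \<open>The column condition keeps \<open>B\<close> no longer than \<open>R\<close>; the last conjunct is what forces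
  the bumped entries to increase when the inserted word avoids 321.\<close>
definition first_row_invariant :: "nat list \<Rightarrow> nat list \<Rightarrow> nat list \<Rightarrow> bool" where
  "first_row_invariant xs R B \<longleftrightarrow>
     sorted_wrt (<) R \<and> sorted_wrt (<) B \<and> mset R + mset B = mset xs \<and>
     length B \<le> length R \<and> (\<forall>j<length B. R ! j < B ! j) \<and>
     (\<forall>z\<in>set R. \<forall>b\<in>set B. z < b \<longrightarrow> has_inversion_above xs z)"

lemma first_row_invariant_set: "first_row_invariant xs R B \<Longrightarrow> set R \<union> set B = set xs"
  unfolding first_row_invariant_def by (metis set_mset_mset set_mset_union)

lemma first_row_invariant_disjoint:
  assumes "first_row_invariant xs R B" and "distinct xs"
  shows "set R \<inter> set B = {}"
proof -
  have "mset (R @ B) = mset xs"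
    using assms(1) by (simp add: first_row_invariant_def)
  then have "distinct (R @ B)"
    using assms(2) by (metis mset_eq_imp_distinct_iff)
  then show ?thesis
    by simp
qed

lemma first_row_invariant_append_step:
  assumes inv: "first_row_invariant xs R B" and greater: "\<forall>y\<in>set R. y < a"
  shows "first_row_invariant (xs @ [a]) (R @ [a]) B"
  unfolding first_row_invariant_def
proof (intro conjI ballI impI)
  show "sorted_wrt (<) (R @ [a])"
    using inv greater by (simp add: first_row_invariant_def sorted_wrt_append)
  show "\<forall>j<length B. (R @ [a]) ! j < B ! j"
    using inv by (auto simp: first_row_invariant_def nth_append)
  fix z b
  assume "z \<in> set (R @ [a])" "b \<in> set B" "z < b"
  then consider "z \<in> set R" | "z = a" "a < b"
    by auto
  then show "has_inversion_above (xs @ [a]) z"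
  proof cases
    case 1
    with inv \<open>b \<in> set B\<close> \<open>z < b\<close> show ?thesis
      by (auto simp: first_row_invariant_def intro: has_inversion_above_append)
  next
    case 2
    have "b \<in> set xs"
      using first_row_invariant_set[OF inv] \<open>b \<in> set B\<close> by auto
    then obtain i where "i < length xs" "xs ! i = b"
      by (auto simp: in_set_conv_nth)
    with 2 show ?thesis
      by (auto intro: has_inversion_above_snoc)
  qed
qed (use inv in \<open>auto simp: first_row_invariant_def\<close>)

text \<open>This is where 321-avoidance enters: an entry inserted after an inversion above \<open>y\<close>
  cannot bump \<open>y\<close>.\<close>
lemma first_row_invariant_bumped_greater:
  assumes inv: "first_row_invariant xs R B" and dist: "distinct xs"
    and avoid: "avoids_321 (xs @ [a])"
    and y: "y \<in> set R" "a < y" and b: "b \<in> set B"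
  shows "b < y"
proof (rule ccontr)
  assume "\<not> b < y"
  moreover have "b \<noteq> y"
    using first_row_invariant_disjoint[OF inv dist] y b by auto
  ultimately have "y < b"
    by simp
  then have "has_inversion_above xs y"
    using inv y(1) b unfolding first_row_invariant_def by blast
  then obtain i j where ij: "i < j" "j < length xs" "xs ! j < xs ! i" "y \<le> xs ! j"
    unfolding has_inversion_above_def by blast
  then have "(xs @ [a]) ! length xs < (xs @ [a]) ! j \<and> (xs @ [a]) ! j < (xs @ [a]) ! i"
    using y by (auto simp: nth_append)
  with avoid ij show False
    unfolding avoids_321_def by (metis length_append_singleton less_Suc_eq)
qed

lemma sorted_wrt_list_update_between:
  fixes R :: "'a::linorder list"
  assumes "sorted_wrt (<) R" "p < length R" "a < R ! p" "\<forall>j<p. R ! j < a"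
  shows "sorted_wrt (<) (R[p := a])"
  unfolding sorted_wrt_iff_nth_less
proof (intro allI impI)
  fix i j
  assume ij: "i < j" "j < length (R[p := a])"
  have R_less: "\<And>i j. i < j \<Longrightarrow> j < length R \<Longrightarrow> R ! i < R ! j"
    using assms(1) by (simp add: sorted_wrt_iff_nth_less)
  show "R[p := a] ! i < R[p := a] ! j"
    using ij assms(2-4) R_less[of i j] R_less[of p j]
    by (cases "i = p"; cases "j = p") (auto simp: nth_list_update)
qed

lemma has_inversion_above_bump:
  assumes "sorted_wrt (<) R" "\<forall>j<p. R ! j < a" "a < R ! p" "R ! p \<in> set xs"
    and "z \<in> set (R[p := a])" "z < R ! p"
  shows "has_inversion_above (xs @ [a]) z"
proof -
  obtain m where m: "m < length R" "z = R[p := a] ! m"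
    using assms(5) by (auto simp: in_set_conv_nth)
  have "z \<le> a"
  proof (cases m p rule: linorder_cases)
    case greater
    then have "R ! p < R ! m"
      using assms(1) m(1) by (simp add: sorted_wrt_iff_nth_less)
    with m assms(6) greater show ?thesis
      by simp
  qed (use m assms(2) in auto)
  obtain i where i: "i < length xs" "xs ! i = R ! p"
    using assms(4) by (metis in_set_conv_nth)
  show ?thesis
    using has_inversion_above_snoc[OF i(1) _ \<open>z \<le> a\<close>] i(2) assms(3) by simp
qed

lemma first_row_invariant_bump_step:
  assumes inv: "first_row_invariant xs R B"
    and dist: "distinct (xs @ [a])" and avoid: "avoids_321 (xs @ [a])"
    and p: "p < length R" "a < R ! p" "\<forall>j<p. R ! j < a"
  shows "first_row_invariant (xs @ [a]) (R[p := a]) (B @ [R ! p])"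
proof -
  from inv have sorted_R: "sorted_wrt (<) R" and sorted_B: "sorted_wrt (<) B"
    and mset: "mset R + mset B = mset xs" and column: "\<forall>j<length B. R ! j < B ! j"
    by (simp_all add: first_row_invariant_def)
  have B_less: "\<forall>b\<in>set B. b < R ! p"
    using first_row_invariant_bumped_greater[OF inv _ avoid] dist p by simp
  have "length B \<le> p"
  proof (rule ccontr)
    assume "\<not> length B \<le> p"
    then have "R ! p < B ! p" "B ! p < R ! p"
      using column B_less by auto
    then show False
      by simp
  qed
  have bumped_mem: "R ! p \<in> set xs"
    using first_row_invariant_set[OF inv] nth_mem[OF p(1)] by blast
  show ?thesis
    unfolding first_row_invariant_def
  proof (intro conjI allI impI ballI)
    show "sorted_wrt (<) (R[p := a])"
      using sorted_wrt_list_update_between[OF sorted_R p] .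
    show "sorted_wrt (<) (B @ [R ! p])"
      using sorted_B B_less by (simp add: sorted_wrt_append)
    show "mset (R[p := a]) + mset (B @ [R ! p]) = mset (xs @ [a])"
      using mset p(1) bumped_mem by (simp add: mset_update insert_DiffM)
    show "length (B @ [R ! p]) \<le> length (R[p := a])"
      using \<open>length B \<le> p\<close> p(1) by simp
  next
    fix j
    assume "j < length (B @ [R ! p])"
    then consider "j < length B" | "j = length B" "j < p" | "j = length B" "j = p"
      using \<open>length B \<le> p\<close> by fastforce
    then show "R[p := a] ! j < (B @ [R ! p]) ! j"
    proof cases
      case 1
      then show ?thesis
        using column \<open>length B \<le> p\<close> by (simp add: nth_append)
    next
      case 2
      then show ?thesis
        using sorted_R p(1) by (simp add: nth_append sorted_wrt_iff_nth_less)
    qed (use \<open>length B \<le> p\<close> p in \<open>simp add: nth_append\<close>)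
  next
    fix z b
    assume "z \<in> set (R[p := a])" "b \<in> set (B @ [R ! p])" "z < b"
    moreover have "b \<le> R ! p"
      using \<open>b \<in> set (B @ [R ! p])\<close> B_less by (cases "b = R ! p") auto
    ultimately show "has_inversion_above (xs @ [a]) z"
      using has_inversion_above_bump[OF sorted_R p(3,2) bumped_mem] by simp
  qed
qed

lemma first_row_invariant_step:
  assumes inv: "first_row_invariant xs R B"
    and dist: "distinct (xs @ [a])" and avoid: "avoids_321 (xs @ [a])"
  shows "case_prod (first_row_invariant (xs @ [a])) (first_row_step (R, B) a)"
proof -
  obtain R' b where rb: "row_insert a R = (R', b)"
    by fastforce
  have "a \<notin> set R"
    using first_row_invariant_set[OF inv] dist by auto
  then have le_iff_less: "y \<le> a \<longleftrightarrow> y < a" if "y \<in> set R" for y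
    using that by (cases "y = a") auto
  from rb show ?thesis
  proof (cases rule: row_insert_cases)
    case 1
    then show ?thesis
      using first_row_invariant_append_step[OF inv] rb le_iff_less by simp
  next
    case (2 p)
    then have "\<forall>j<p. R ! j < a"
      using le_iff_less by (metis less_trans nth_mem)
    then show ?thesis
      using first_row_invariant_bump_step[OF inv dist avoid 2(1,3)] rb 2 by simp
  qed
qed

lemma first_row_invariant_foldl:
  "distinct xs \<Longrightarrow> avoids_321 xs \<Longrightarrow> case_prod (first_row_invariant xs) (foldl first_row_step ([], []) xs)"
proof (induction xs rule: rev_induct)
  case Nil
  show ?case by (simp add: first_row_invariant_def)
next
  case (snoc a xs)
  obtain R B where RB: "foldl first_row_step ([], []) xs = (R, B)"
    by fastforce
  with snoc have "first_row_invariant xs R B"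
    using avoids_321_appendD by auto
  with RB snoc.prems show ?case
    using first_row_invariant_step by simp
qed

lemma rs_shape_if_avoids_321:
  assumes "v permutes {..<n}" and "avoids_321 (map v [0..<n])"
  obtains k where "2 * k \<le> n" "rs_shape n v = two_row_shape n k"
proof -
  have "distinct (map v [0..<n])"
    using permutes_inj[OF assms(1)] by (simp add: distinct_map inj_on_def inj_def)
  moreover obtain R B where RB: "foldl first_row_step ([], []) (map v [0..<n]) = (R, B)"
    by fastforce
  ultimately have "first_row_invariant (map v [0..<n]) R B"
    using first_row_invariant_foldl assms(2) by fastforce
  then have B: "sorted_wrt (<) B" "length B \<le> length R" "length R + length B = n"
    unfolding first_row_invariant_def by (auto dest: arg_cong[of _ _ size])
  show ?thesis
  proof (rule that)
    show "2 * length B \<le> n"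
      using B by simp
    show "rs_shape n v = two_row_shape n (length B)"
      using rs_shape_two_rows[OF RB B] .
  qed
qed

subsection \<open>A product of commuting reflections with every two-row shape\<close>

definition even_word :: "nat \<Rightarrow> nat list" where
  "even_word k = map (\<lambda>j. 2 * j) [0..<k]"

lemma even_word_0 [simp]: "even_word 0 = []"
  by (simp add: even_word_def)

lemma even_word_Suc: "even_word (Suc k) = even_word k @ [2 * k]"
  by (simp add: even_word_def)

lemma distinct_even_word: "distinct (even_word k)"
  by (simp add: even_word_def distinct_map inj_on_def)

lemma is_word_even_word: "2 * k \<le> n \<Longrightarrow> is_word n (even_word k)"
  by (auto simp: is_word_def even_word_def)

lemma word_perm_even_word:
  "word_perm (even_word k) x = (if x < 2 * k then if even x then Suc x else x - 1 else x)"
proof (induction k arbitrary: x)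
  case (Suc k)
  then show ?case
    by (auto simp: even_word_Suc word_perm_append sref_def)
qed simp

lemma foldl_first_row_step_even_word_pairs:
  "j \<le> k \<Longrightarrow> foldl first_row_step ([], []) (map (word_perm (even_word k)) [0..<2 * j]) =
     (even_word j, map Suc (even_word j))"
proof (induction j)
  case (Suc j)
  have upt: "[0..<2 * Suc j] = [0..<2 * j] @ [2 * j, Suc (2 * j)]"
    by simp
  have entries: "map (word_perm (even_word k)) [2 * j, Suc (2 * j)] = [Suc (2 * j), 2 * j]"
    using Suc.prems by (simp add: word_perm_even_word)
  have small: "\<forall>z\<in>set (even_word j). z < 2 * j" "\<forall>z\<in>set (even_word j). z < Suc (2 * j)"
    by (auto simp: even_word_def)
  have "foldl first_row_step ([], []) (map (word_perm (even_word k)) [0..<2 * Suc j]) =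
      foldl first_row_step (even_word j, map Suc (even_word j)) [Suc (2 * j), 2 * j]"
    unfolding upt map_append foldl_append entries using Suc by simp
  also have "\<dots> = (even_word (Suc j), map Suc (even_word (Suc j)))"
    using small by (simp add: row_insert_greater row_insert_bump_last even_word_Suc)
  finally show ?case .
qed simp

lemma foldl_first_row_step_even_word:
  "2 * k \<le> n \<Longrightarrow> foldl first_row_step ([], []) (map (word_perm (even_word k)) [0..<n]) =
     (even_word k @ [2 * k..<n], map Suc (even_word k))"
proof (induction n rule: dec_induct)
  case base
  show ?case
    using foldl_first_row_step_even_word_pairs[of k k] by simp
next
  case (step m)
  have "\<forall>z\<in>set (even_word k @ [2 * k..<m]). z < m"
    using step by (auto simp: even_word_def)
  with step show ?case
    by (simp add: word_perm_even_word row_insert_greater)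
qed

lemma rs_shape_even_word:
  assumes "2 * k \<le> n"
  shows "rs_shape n (word_perm (even_word k)) = two_row_shape n k"
proof -
  have "sorted_wrt (<) (map Suc (even_word k))"
    by (simp add: even_word_def sorted_wrt_iff_nth_less)
  moreover have "length (map Suc (even_word k)) \<le> length (even_word k @ [2 * k..<n])"
    "length (even_word k @ [2 * k..<n]) + length (map Suc (even_word k)) = n"
    using assms by (simp_all add: even_word_def)
  ultimately show ?thesis
    using rs_shape_two_rows[OF foldl_first_row_step_even_word[OF assms]] by (simp add: even_word_def)
qed

lemma coxeter_length_even_word:
  assumes "2 * k \<le> n"
  shows "coxeter_length n (word_perm (even_word k)) = k"
proof -
  obtain ws where ws: "reduced_word n (word_perm (even_word k)) ws"
    using reduced_word_exists word_perm_permutes[OF is_word_even_word[OF assms]] by blast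
  have subset: "set (even_word k) \<subseteq> set ws"
  proof
    fix i
    assume "i \<in> set (even_word k)"
    then have "i < 2 * k" "even i"
      by (auto simp: even_word_def)
    then have "i < word_perm ws i"
      using ws by (simp add: reduced_word_def word_perm_even_word)
    then show "i \<in> set ws"
      using word_perm_le_iff[of i ws i] by auto
  qed
  have "k \<le> length ws"
    using card_mono[OF finite_set subset] card_length[of ws] distinct_card[OF distinct_even_word]
    by (simp add: even_word_def)
  moreover have "coxeter_length n (word_perm (even_word k)) \<le> k"
    using coxeter_length_le[OF is_word_even_word[OF assms]] by (simp add: even_word_def)
  ultimately show ?thesis
    using ws by (simp add: reduced_word_def)
qed

lemma sref_comp_word_perm_commute:
  "\<forall>j\<in>set us. sref i \<circ> sref j = sref j \<circ> sref i \<Longrightarrow> sref i \<circ> word_perm us = word_perm us \<circ> sref i"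
proof (induction us)
  case (Cons j us)
  have ij: "sref i \<circ> sref j = sref j \<circ> sref i"
    using Cons.prems by (meson list.set_intros(1))
  have IH: "sref i \<circ> word_perm us = word_perm us \<circ> sref i"
    using Cons.IH Cons.prems by (meson list.set_intros(2))
  have "sref i \<circ> word_perm (j # us) = (sref i \<circ> sref j) \<circ> word_perm us"
    by (simp add: comp_assoc)
  also have "\<dots> = sref j \<circ> (sref i \<circ> word_perm us)"
    by (simp only: ij comp_assoc)
  also have "\<dots> = word_perm (j # us) \<circ> sref i"
    by (simp add: IH comp_assoc)
  finally show ?case .
qed simp

text \<open>A repeated letter commutes back to its previous occurrence and cancels.\<close>
lemma distinct_subword_if_commuting:
  "\<forall>i\<in>set ws. \<forall>j\<in>set ws. sref i \<circ> sref j = sref j \<circ> sref i \<Longrightarrow>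
    \<exists>ds. distinct ds \<and> set ds \<subseteq> set ws \<and> word_perm ds = word_perm ws"
proof (induction ws)
  case Nil
  show ?case by (intro exI[of _ "[]"]) simp
next
  case (Cons i ws)
  then have "\<forall>i\<in>set ws. \<forall>j\<in>set ws. sref i \<circ> sref j = sref j \<circ> sref i"
    by (meson list.set_intros(2))
  with Cons.IH obtain ds where ds: "distinct ds" "set ds \<subseteq> set ws" "word_perm ds = word_perm ws"
    by blast
  show ?case
  proof (cases "i \<in> set ds")
    case False
    with ds show ?thesis
      by (intro exI[of _ "i # ds"]) auto
  next
    case True
    then obtain us vs where uv: "ds = us @ i # vs"
      by (meson split_list)
    have "\<forall>j\<in>set us. sref i \<circ> sref j = sref j \<circ> sref i"
    proof
      fix j
      assume "j \<in> set us"
      then have "j \<in> set (i # ws)"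
        using ds(2) uv by auto
      with Cons.prems show "sref i \<circ> sref j = sref j \<circ> sref i"
        by (meson list.set_intros(1))
    qed
    then have commute: "sref i \<circ> word_perm us = word_perm us \<circ> sref i"
      by (rule sref_comp_word_perm_commute)
    have "word_perm (i # ws) = sref i \<circ> word_perm us \<circ> sref i \<circ> word_perm vs"
      by (simp add: ds(3)[symmetric] uv word_perm_append comp_assoc)
    also have "\<dots> = word_perm us \<circ> (sref i \<circ> sref i) \<circ> word_perm vs"
      by (simp only: commute comp_assoc)
    also have "\<dots> = word_perm (us @ vs)"
      by (simp add: sref_comp_sref word_perm_append)
    finally show ?thesis
      using ds uv by (intro exI[of _ "us @ vs"]) auto
  qed
qed

lemma longest_parabolic_even_word:
  assumes "2 * k \<le> n"
  shows "longest_parabolic n (set (even_word k)) (word_perm (even_word k))"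
  unfolding longest_parabolic_def
proof (intro conjI ballI)
  show "word_perm (even_word k) \<in> parabolic n (set (even_word k))"
    using is_word_even_word[OF assms] unfolding parabolic_def by blast
  fix u
  assume "u \<in> parabolic n (set (even_word k))"
  then obtain ws where ws: "is_word n ws" "set ws \<subseteq> set (even_word k)" "u = word_perm ws"
    unfolding parabolic_def by blast
  have "\<forall>i\<in>set ws. \<forall>j\<in>set ws. sref i \<circ> sref j = sref j \<circ> sref i"
  proof (intro ballI)
    fix i j
    assume "i \<in> set ws" "j \<in> set ws"
    then obtain a b where ab: "i = 2 * a" "j = 2 * b"
      using ws(2) unfolding even_word_def set_map by blast
    show "sref i \<circ> sref j = sref j \<circ> sref i"
    proof (cases "a = b")
      case False
      with ab have "i \<noteq> j" "Suc i \<noteq> j" "Suc j \<noteq> i"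
        by presburger+
      then show ?thesis
        by (rule sref_commute)
    qed (use ab in simp)
  qed
  then obtain ds where ds: "distinct ds" "set ds \<subseteq> set ws" "word_perm ds = u"
    using distinct_subword_if_commuting ws(3) by blast
  have "coxeter_length n u \<le> length ds"
    using coxeter_length_le[of n ds] ds ws(1) by (auto simp: is_word_def)
  also have "\<dots> \<le> length (even_word k)"
    using card_mono[of "set (even_word k)" "set ds"] ds ws(2)
    by (simp add: distinct_card distinct_even_word)
  also have "\<dots> = coxeter_length n (word_perm (even_word k))"
    using coxeter_length_even_word[OF assms] by (simp add: even_word_def)
  finally show "coxeter_length n u \<le> coxeter_length n (word_perm (even_word k))" .
qed

theorem corollary6p6:
  fixes n :: nat and v :: "nat \<Rightarrow> nat" and a :: "(nat \<Rightarrow> nat) \<Rightarrow> nat"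
  assumes "v permutes {..<n}"
    and "is_a_function n a"
    and "boolean_perm n v"
  shows "a v = lambda2 n v"
proof -
  obtain k where k: "2 * k \<le> n" "rs_shape n v = two_row_shape n k"
    using rs_shape_if_avoids_321[OF assms(1) avoids_321_if_boolean_perm[OF assms(1,3)]] .
  let ?w = "word_perm (even_word k)"
  have "a v = a ?w"
    using assms(2,1) word_perm_permutes[OF is_word_even_word] k rs_shape_even_word
    unfolding is_a_function_def by metis
  also have "\<dots> = coxeter_length n ?w"
    using assms(2) longest_parabolic_even_word[OF k(1)] is_word_even_word[OF k(1)]
    unfolding is_a_function_def is_word_def by blast
  also have "\<dots> = lambda2 n v"
    using coxeter_length_even_word[OF k(1)] lambda2_two_row_shape[OF k(2,1)] by simp
  finally show ?thesis .
qed

end
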